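(* Let $M$ be a Hausdorff space satisfying the first axiom of countability and the Lindelöf condition, and let $\mathcal{I}$ be a $\sigma$-ideal in the Borel $\sigma$-algebra $\mathcal{B}(M)$ containing all singletons $\{x\}$, $x\in M$. Then the quotient $\sigma$-algebra $\mathcal{B}(M)/\mathcal{I}$ has no points.
   Context: A $\sigma$-ideal $\mathcal{I}$ of a $\sigma$-algebra $\mathcal{B}$ is a nonempty subset closed under $A\mapsto A\wedge B$ ($B\in\mathcal{B}$) and under countable joins. The quotient $\mathcal{B}/\mathcal{I}$ is the set of classes of the equivalence $a\sim b\iff\exists p\in\mathcal{I}: a\vee p=b\vee p$, with the induced Boolean $\sigma$-algebra operations $[a]\vee[b]=[a\vee b]$, $[a]\wedge[b]=[a\wedge b]$, $[a]^\perp=[a^\perp]$, countable joins $\bigvee_n[a_n]=[\bigvee_n a_n]$. A point in a $\sigma$-complete lattice $\mathbb{L}$ is a nonempty subset $\mathfrak{p}$ with: (1) $0\notin\mathfrak{p}$; (2) $a,b\in\mathfrak{p}\Rightarrow a\wedge b\in\mathfrak{p}$; (3) $a\in\mathfrak{p}$, $a\le b\Rightarrow b\in\mathfrak{p}$; (4) for every countable family $(a_n)$ with $\bigvee_n a_n\in\mathfrak{p}$ there is $n$ with $a_n\in\mathfrak{p}$. *)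

theory Defs
  imports "HOL-Analysis.Analysis"
begin

definition Borel_sets :: "'a topology \<Rightarrow> 'a set set" where
  "Borel_sets X = sigma_sets (topspace X) {U. openin X U}"

definition sigma_ideal :: "'a set set \<Rightarrow> 'a set set \<Rightarrow> bool" where
  "sigma_ideal B I \<longleftrightarrow> I \<noteq> {} \<and> I \<subseteq> B \<and>
     (\<forall>A\<in>I. \<forall>C\<in>B. A \<inter> C \<in> I) \<and>
     (\<forall>F::nat \<Rightarrow> 'a set. range F \<subseteq> I \<longrightarrow> (\<Union>n. F n) \<in> I)"

definition qequiv :: "'a set set \<Rightarrow> 'a set \<Rightarrow> 'a set \<Rightarrow> bool" where
  "qequiv I a b \<longleftrightarrow> (\<exists>p\<in>I. a \<union> p = b \<union> p)"

definition qclass :: "'a set set \<Rightarrow> 'a set set \<Rightarrow> 'a set \<Rightarrow> 'a set set" where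
  "qclass B I a = {b\<in>B. qequiv I a b}"

definition quot :: "'a set set \<Rightarrow> 'a set set \<Rightarrow> 'a set set set" where
  "quot B I = qclass B I ` B"

definition qrep :: "'a set set \<Rightarrow> 'a set set \<Rightarrow> 'a set set \<Rightarrow> 'a set" where
  "qrep B I x = (SOME a. a \<in> B \<and> x = qclass B I a)"

definition qinf :: "'a set set \<Rightarrow> 'a set set \<Rightarrow> 'a set set \<Rightarrow> 'a set set \<Rightarrow> 'a set set" where
  "qinf B I x y = qclass B I (qrep B I x \<inter> qrep B I y)"

definition qzero :: "'a set set \<Rightarrow> 'a set set \<Rightarrow> 'a set set" where
  "qzero B I = qclass B I {}"

definition qSup :: "'a set set \<Rightarrow> 'a set set \<Rightarrow> (nat \<Rightarrow> 'a set set) \<Rightarrow> 'a set set" where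
  "qSup B I F = qclass B I (\<Union>n. qrep B I (F n))"

definition qle :: "'a set set \<Rightarrow> 'a set set \<Rightarrow> 'a set set \<Rightarrow> 'a set set \<Rightarrow> bool" where
  "qle B I x y \<longleftrightarrow> qinf B I x y = x"

definition is_point :: "'a set set \<Rightarrow> 'a set set \<Rightarrow> 'a set set set \<Rightarrow> bool" where
  "is_point B I P \<longleftrightarrow> P \<noteq> {} \<and> P \<subseteq> quot B I \<and>
     qzero B I \<notin> P \<and>
     (\<forall>x\<in>P. \<forall>y\<in>P. qinf B I x y \<in> P) \<and>
     (\<forall>x\<in>P. \<forall>y\<in>quot B I. qle B I x y \<longrightarrow> y \<in> P) \<and>
     (\<forall>F. range F \<subseteq> quot B I \<longrightarrow> qSup B I F \<in> P \<longrightarrow> (\<exists>n. F n \<in> P))"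

end

theory Submission
  imports Defs
begin

text \<open>Suppose \<open>P\<close> were a point of \<open>\<B>(M)/\<I>\<close>. For each \<open>x\<close>, first countability and the
  Hausdorff property give countably many open neighbourhoods \<open>V\<^sub>n\<close> of \<open>x\<close> whose closures meet
  in \<open>{x}\<close>, so \<open>M\<close> is \<open>{x}\<close> together with the countably many open sets \<open>M - cl V\<^sub>n\<close>. As
  \<open>{x} \<in> \<I>\<close> and \<open>[M] \<in> P\<close>, some \<open>[M - cl V\<^sub>n]\<close> lies in \<open>P\<close>: every point has an open
  neighbourhood \<open>V\<^sub>x\<close> with \<open>[M - cl V\<^sub>x] \<in> P\<close>. By the Lindelof property countably many \<open>V\<^sub>x\<close>
  cover \<open>M\<close>, so some \<open>[V\<^sub>x] \<in> P\<close> too; but \<open>V\<^sub>x\<close> and \<open>M - cl V\<^sub>x\<close> are disjoint, forcing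
  \<open>0 \<in> P\<close>.\<close>

lemma sigma_ideal_Un:
  assumes "sigma_ideal B I" "p \<in> I" "q \<in> I"
  shows "p \<union> q \<in> I"
proof -
  let ?F = "\<lambda>n::nat. if n = 0 then p else q"
  have "range ?F \<subseteq> I" using assms(2,3) by auto
  then have "(\<Union>n. ?F n) \<in> I" using assms(1) unfolding sigma_ideal_def by blast
  moreover have "(\<Union>n. ?F n) = p \<union> q" by (auto split: if_splits)
  ultimately show ?thesis by simp
qed

lemma qequiv_refl: "sigma_ideal B I \<Longrightarrow> qequiv I a a"
  unfolding qequiv_def sigma_ideal_def by auto

lemma qequiv_sym: "qequiv I a b \<Longrightarrow> qequiv I b a"
  unfolding qequiv_def by metis

lemma qequiv_trans:
  assumes "sigma_ideal B I" "qequiv I a b" "qequiv I b c"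
  shows "qequiv I a c"
proof -
  obtain p q where "p \<in> I" "q \<in> I" "a \<union> p = b \<union> p" "b \<union> q = c \<union> q"
    using assms(2,3) unfolding qequiv_def by blast
  then have "p \<union> q \<in> I" "a \<union> (p \<union> q) = c \<union> (p \<union> q)"
    using sigma_ideal_Un[OF assms(1)] by blast+
  then show ?thesis unfolding qequiv_def by blast
qed

lemma qclass_eq:
  assumes "sigma_ideal B I" "qequiv I a b"
  shows "qclass B I a = qclass B I b"
proof -
  have "qequiv I a c \<longleftrightarrow> qequiv I b c" for c
    using assms qequiv_trans[OF assms(1)] qequiv_sym by metis
  then show ?thesis unfolding qclass_def by simp
qed

lemma qclass_self: "sigma_ideal B I \<Longrightarrow> a \<in> B \<Longrightarrow> a \<in> qclass B I a"
  unfolding qclass_def using qequiv_refl by blast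

lemma qrep_in_quot:
  assumes "x \<in> quot B I"
  shows "qrep B I x \<in> B" "qclass B I (qrep B I x) = x"
proof -
  have "\<exists>a. a \<in> B \<and> x = qclass B I a" using assms unfolding quot_def by blast
  from someI_ex[OF this] show "qrep B I x \<in> B" "qclass B I (qrep B I x) = x"
    unfolding qrep_def by auto
qed

lemma qequiv_qrep_qclass:
  assumes "sigma_ideal B I" "a \<in> B"
  shows "qequiv I a (qrep B I (qclass B I a))"
proof -
  let ?x = "qclass B I a"
  have x: "?x \<in> quot B I" using assms(2) unfolding quot_def by blast
  have "qrep B I ?x \<in> qclass B I (qrep B I ?x)"
    using qclass_self[OF assms(1) qrep_in_quot(1)[OF x]] .
  then have "qrep B I ?x \<in> ?x" unfolding qrep_in_quot(2)[OF x] .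
  then show ?thesis unfolding qclass_def by blast
qed

lemma qinf_qclass:
  assumes "sigma_ideal B I" "a \<in> B" "b \<in> B"
  shows "qinf B I (qclass B I a) (qclass B I b) = qclass B I (a \<inter> b)"
proof -
  let ?a' = "qrep B I (qclass B I a)" and ?b' = "qrep B I (qclass B I b)"
  obtain p where p: "p \<in> I" "a \<union> p = ?a' \<union> p"
    using qequiv_qrep_qclass[OF assms(1,2)] unfolding qequiv_def by blast
  obtain q where q: "q \<in> I" "b \<union> q = ?b' \<union> q"
    using qequiv_qrep_qclass[OF assms(1,3)] unfolding qequiv_def by blast
  have "(?a' \<inter> ?b') \<union> (p \<union> q) = (a \<inter> b) \<union> (p \<union> q)"
    using p(2) q(2) by blast
  then have "qequiv I (?a' \<inter> ?b') (a \<inter> b)"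
    unfolding qequiv_def using sigma_ideal_Un[OF assms(1) p(1) q(1)] by blast
  then show ?thesis unfolding qinf_def by (rule qclass_eq[OF assms(1)])
qed

lemma qSup_qclass:
  assumes "sigma_ideal B I" "range f \<subseteq> B"
  shows "qSup B I (\<lambda>n. qclass B I (f n)) = qclass B I (\<Union>n. f n)"
proof -
  let ?f' = "\<lambda>n. qrep B I (qclass B I (f n))"
  have "\<exists>p\<in>I. f n \<union> p = ?f' n \<union> p" for n
    using qequiv_qrep_qclass[OF assms(1)] assms(2) unfolding qequiv_def by blast
  then obtain p where p: "\<And>n. p n \<in> I" "\<And>n. f n \<union> p n = ?f' n \<union> p n"
    by metis
  have "(\<Union>n. p n) \<in> I" using assms(1) p(1) unfolding sigma_ideal_def by blast
  moreover have "(\<Union>n. ?f' n) \<union> (\<Union>n. p n) = (\<Union>n. f n) \<union> (\<Union>n. p n)"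
    using p(2) by blast
  ultimately have "qequiv I (\<Union>n. ?f' n) (\<Union>n. f n)" unfolding qequiv_def by blast
  then show ?thesis unfolding qSup_def using qclass_eq[OF assms(1)] by blast
qed

lemma is_point_qclass_empty: "is_point B I P \<Longrightarrow> qclass B I {} \<notin> P"
  unfolding is_point_def qzero_def by simp

lemma is_point_qclass_Int:
  assumes "sigma_ideal B I" "is_point B I P" "a \<in> B" "b \<in> B"
    and "qclass B I a \<in> P" "qclass B I b \<in> P"
  shows "qclass B I (a \<inter> b) \<in> P"
  using assms(2,5,6) qinf_qclass[OF assms(1,3,4)] unfolding is_point_def by metis

lemma is_point_qclass_mono:
  assumes "sigma_ideal B I" "is_point B I P" "a \<in> B" "b \<in> B"
    and "p \<in> I" "a \<subseteq> b \<union> p" "qclass B I a \<in> P"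
  shows "qclass B I b \<in> P"
proof -
  have "qequiv I (a \<inter> b) a" unfolding qequiv_def using assms(5,6) by blast
  then have "qle B I (qclass B I a) (qclass B I b)"
    unfolding qle_def qinf_qclass[OF assms(1,3,4)] by (rule qclass_eq[OF assms(1)])
  moreover have "qclass B I b \<in> quot B I" using assms(4) unfolding quot_def by blast
  ultimately show ?thesis using assms(2,7) unfolding is_point_def by blast
qed

lemma is_point_qclass_space:
  assumes "sigma_ideal B I" "is_point B I P" "B \<subseteq> Pow T" "T \<in> B"
  shows "qclass B I T \<in> P"
proof -
  obtain x where x: "x \<in> P" "x \<in> quot B I" using assms(2) unfolding is_point_def by blast
  obtain p where "p \<in> I" using assms(1) unfolding sigma_ideal_def by blast
  moreover have "qrep B I x \<subseteq> T \<union> p" using qrep_in_quot(1)[OF x(2)] assms(3) by blast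
  ultimately show ?thesis
    using is_point_qclass_mono[OF assms(1,2) qrep_in_quot(1)[OF x(2)] assms(4)] x
    by (simp add: qrep_in_quot(2))
qed

lemma is_point_qclass_Union:
  assumes "sigma_ideal B I" "is_point B I P" "countable \<C>" "\<C> \<subseteq> B"
    and "qclass B I (\<Union>\<C>) \<in> P"
  shows "\<exists>C\<in>\<C>. qclass B I C \<in> P"
proof -
  have "\<C> \<noteq> {}" using assms(5) is_point_qclass_empty[OF assms(2)] by auto
  then have range_\<C>: "range (from_nat_into \<C>) = \<C>" using assms(3) by simp
  then have "range (\<lambda>n. qclass B I (from_nat_into \<C> n)) \<subseteq> quot B I"
    using assms(4) unfolding quot_def by blast
  moreover have "qSup B I (\<lambda>n. qclass B I (from_nat_into \<C> n)) \<in> P"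
    using qSup_qclass[OF assms(1)] assms(4,5) range_\<C> by simp
  ultimately have "\<exists>n. qclass B I (from_nat_into \<C> n) \<in> P"
    using assms(2) unfolding is_point_def by blast
  then show ?thesis using range_\<C> by blast
qed

lemma openin_Borel_sets: "openin X U \<Longrightarrow> U \<in> Borel_sets X"
  unfolding Borel_sets_def by (rule sigma_sets.Basic) simp

lemma Borel_sets_subset_Pow: "Borel_sets X \<subseteq> Pow (topspace X)"
  unfolding Borel_sets_def using sigma_sets_into_sp[of "{U. openin X U}"] openin_subset by blast

lemma is_point_Borel_sets_qclass_topspace:
  "sigma_ideal (Borel_sets X) I \<Longrightarrow> is_point (Borel_sets X) I P
    \<Longrightarrow> qclass (Borel_sets X) I (topspace X) \<in> P"
  by (rule is_point_qclass_space[OF _ _ Borel_sets_subset_Pow openin_Borel_sets[OF openin_topspace]])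

lemma is_point_Borel_sets_open_compl_closure_of:
  assumes "sigma_ideal (Borel_sets X) I" "is_point (Borel_sets X) I P" "openin X V"
    and "qclass (Borel_sets X) I V \<in> P"
  shows "qclass (Borel_sets X) I (topspace X - X closure_of V) \<notin> P"
proof
  let ?B = "Borel_sets X" and ?T = "topspace X"
  have open_compl: "openin X (?T - X closure_of V)"
    using openin_diff[OF openin_topspace closedin_closure_of] .
  assume "qclass ?B I (?T - X closure_of V) \<in> P"
  then have "qclass ?B I (V \<inter> (?T - X closure_of V)) \<in> P"
    by (rule is_point_qclass_Int[OF assms(1,2) openin_Borel_sets[OF assms(3)]
          openin_Borel_sets[OF open_compl] assms(4)])
  moreover have "V \<inter> (?T - X closure_of V) = {}"
    using closure_of_subset[OF openin_subset[OF assms(3)]] by blast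
  ultimately show False using is_point_qclass_empty[OF assms(2)] by simp
qed

lemma Hausdorff_first_countable_Inter_closure_of_nbhds:
  assumes "Hausdorff_space X" "first_countable X" "x \<in> topspace X"
  obtains \<V> where "countable \<V>" "\<And>V. V \<in> \<V> \<Longrightarrow> openin X V \<and> x \<in> V"
    "(\<Inter>V\<in>\<V>. X closure_of V) = {x}"
proof -
  have "\<exists>\<B>. countable \<B> \<and> (\<forall>V\<in>\<B>. openin X V) \<and>
      (\<forall>U. openin X U \<and> x \<in> U \<longrightarrow> (\<exists>V\<in>\<B>. x \<in> V \<and> V \<subseteq> U))"
    using assms(2,3) unfolding first_countable_def by blast
  then obtain \<B> where \<B>: "countable \<B>" "\<forall>V\<in>\<B>. openin X V"
    "\<forall>U. openin X U \<and> x \<in> U \<longrightarrow> (\<exists>V\<in>\<B>. x \<in> V \<and> V \<subseteq> U)"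
    by blast
  define \<V> where "\<V> = {V\<in>\<B>. x \<in> V}"
  have nbhd: "openin X V \<and> x \<in> V" if "V \<in> \<V>" for V using that \<B>(2) unfolding \<V>_def by blast
  have "y = x" if y: "y \<in> (\<Inter>V\<in>\<V>. X closure_of V)" for y
  proof (rule ccontr)
    assume "y \<noteq> x"
    obtain V where "V \<in> \<V>" using \<B>(3) openin_topspace assms(3) unfolding \<V>_def by blast
    then have "y \<in> topspace X" using y closure_of_subset_topspace[of X V] by blast
    then have "\<exists>U W. openin X U \<and> openin X W \<and> x \<in> U \<and> y \<in> W \<and> disjnt U W"
      using assms(1,3) \<open>y \<noteq> x\<close> unfolding Hausdorff_space_def by blast
    then obtain U W where UW: "openin X U" "openin X W" "x \<in> U" "y \<in> W" "disjnt U W"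
      by blast
    then obtain V where V: "V \<in> \<V>" "V \<subseteq> U" using \<B>(3) unfolding \<V>_def by blast
    have "W \<inter> X closure_of V = {}"
      using openin_Int_closure_of_eq_empty[OF UW(2)] UW(5) V(2) unfolding disjnt_def by blast
    then show False using y UW(4) V(1) by blast
  qed
  moreover have "x \<in> X closure_of V" if "V \<in> \<V>" for V
    using nbhd[OF that] closure_of_subset[OF openin_subset, of X V] by blast
  ultimately have "(\<Inter>V\<in>\<V>. X closure_of V) = {x}" by blast
  moreover have "countable \<V>" using \<B>(1) unfolding \<V>_def by simp
  ultimately show ?thesis using that nbhd by blast
qed

lemma Lindelof_space_countable_nbhd_subcover:
  assumes "Lindelof_space X" "\<And>x. x \<in> topspace X \<Longrightarrow> openin X (V x) \<and> x \<in> V x"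
  obtains S where "countable S" "S \<subseteq> topspace X" "(\<Union>x\<in>S. V x) = topspace X"
proof -
  let ?T = "topspace X"
  have open_V: "openin X U" if "U \<in> V ` ?T" for U using that assms(2) by blast
  have cover: "\<Union>(V ` ?T) = ?T"
  proof
    show "\<Union>(V ` ?T) \<subseteq> ?T" using openin_subset[OF open_V] by blast
    show "?T \<subseteq> \<Union>(V ` ?T)" using assms(2) by blast
  qed
  obtain \<V> where \<V>: "countable \<V> \<and> \<V> \<subseteq> V ` ?T \<and> \<Union>\<V> = ?T"
    using Lindelof_spaceD[OF assms(1) open_V cover] by (rule exE)
  then have "countable \<V> \<and> \<V> \<subseteq> V ` ?T" by simp
  then obtain S where S: "countable S" "S \<subseteq> ?T" "\<V> = V ` S"
    unfolding countable_subset_image by blast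
  show ?thesis by (rule that[OF S(1,2)]) (use \<V> S(3) in simp)
qed

lemma is_point_Borel_sets_compl_closure_of_nbhd:
  assumes "Hausdorff_space X" "first_countable X" "sigma_ideal (Borel_sets X) I"
    and "is_point (Borel_sets X) I P" "x \<in> topspace X" "{x} \<in> I"
  shows "\<exists>V. openin X V \<and> x \<in> V \<and>
    qclass (Borel_sets X) I (topspace X - X closure_of V) \<in> P"
proof -
  let ?B = "Borel_sets X" and ?T = "topspace X"
  obtain \<V> where \<V>: "countable \<V>" "\<And>V. V \<in> \<V> \<Longrightarrow> openin X V \<and> x \<in> V"
    "(\<Inter>V\<in>\<V>. X closure_of V) = {x}"
    using Hausdorff_first_countable_Inter_closure_of_nbhds[OF assms(1,2,5)] by blast
  define \<C> where "\<C> = (\<lambda>V. ?T - X closure_of V) ` \<V>"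
  have open_\<C>: "openin X C" if "C \<in> \<C>" for C
    using that openin_diff[OF openin_topspace closedin_closure_of] unfolding \<C>_def by blast
  have "qclass ?B I ?T \<in> P" by (rule is_point_Borel_sets_qclass_topspace[OF assms(3,4)])
  moreover have "openin X (\<Union>\<C>)" using open_\<C> by blast
  moreover have "?T \<subseteq> \<Union>\<C> \<union> {x}" using \<V>(3) unfolding \<C>_def by blast
  ultimately have "qclass ?B I (\<Union>\<C>) \<in> P"
    using is_point_qclass_mono[OF assms(3,4) openin_Borel_sets[OF openin_topspace]
        openin_Borel_sets assms(6)] by blast
  moreover have "countable \<C>" using \<V>(1) unfolding \<C>_def by blast
  moreover have "\<C> \<subseteq> ?B" using open_\<C> openin_Borel_sets by blast
  ultimately obtain C where "C \<in> \<C>" "qclass ?B I C \<in> P"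
    using is_point_qclass_Union[OF assms(3,4)] by blast
  then show ?thesis using \<V>(2) unfolding \<C>_def by blast
qed

theorem proposition3p30:
  fixes X :: "'a topology" and I :: "'a set set"
  assumes "Hausdorff_space X" and "first_countable X" and "Lindelof_space X"
    and "sigma_ideal (Borel_sets X) I"
    and "\<And>x. x \<in> topspace X \<Longrightarrow> {x} \<in> I"
  shows "\<not> (\<exists>P. is_point (Borel_sets X) I P)"
proof
  assume "\<exists>P. is_point (Borel_sets X) I P"
  then obtain P where P: "is_point (Borel_sets X) I P" ..
  let ?B = "Borel_sets X" and ?T = "topspace X"
  have "\<forall>x\<in>?T. \<exists>V. openin X V \<and> x \<in> V \<and> qclass ?B I (?T - X closure_of V) \<in> P"
    using is_point_Borel_sets_compl_closure_of_nbhd[OF assms(1,2,4) P _ assms(5)] by blast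
  from bchoice[OF this] obtain V where V: "\<forall>x\<in>?T. openin X (V x) \<and> x \<in> V x \<and>
      qclass ?B I (?T - X closure_of V x) \<in> P"
    by blast
  have nbhd: "\<And>x. x \<in> ?T \<Longrightarrow> openin X (V x) \<and> x \<in> V x" using V by blast
  obtain S where S: "countable S" "S \<subseteq> ?T" "(\<Union>x\<in>S. V x) = ?T"
    by (rule Lindelof_space_countable_nbhd_subcover[OF assms(3) nbhd])
  have "qclass ?B I (\<Union>(V ` S)) \<in> P"
    using is_point_Borel_sets_qclass_topspace[OF assms(4) P] S(3) by simp
  moreover have "V ` S \<subseteq> ?B" using S(2) nbhd openin_Borel_sets[of X] by blast
  ultimately obtain x where "x \<in> S" "qclass ?B I (V x) \<in> P"
    using is_point_qclass_Union[OF assms(4) P countable_image[OF S(1)]] by blast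
  then show False
    using is_point_Borel_sets_open_compl_closure_of[OF assms(4) P] V S(2) by blast
qed

end
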